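(* Let $K$ be an algebraically closed field complete with respect to a non-archimedean absolute value, let $\lambda_3\in K$, let $\sqrt{1-\lambda_3}$ denote a fixed square root, and let $\varphi(z)=z+\sqrt{1-\lambda_3}+\frac1z$. Let $\xi$ be the unique point of $\mathbb{P}^1_{\mathrm{Berk}}$ with $w_\varphi(\xi)=1$. (A) If $|\lambda_3|\le1$, then $\xi=\zeta_G$ and $\xi$ satisfies (W1). (B) If $|\lambda_3|>1$, then $\xi=\zeta_{D(0,\sqrt{|\lambda_3|})}$ and $\xi$ satisfies (W3).
   Context: $\varphi$ has degree 2, fixed points $\infty$ (double, multiplier $1$) and $-1/\sqrt{1-\lambda_3}$ (multiplier $\lambda_3$). $\mathbb{P}^1_{\mathrm{Berk}}$ is the Berkovich projective line over $K$; $\zeta_{D(a,r)}$ is the point corresponding to the disc $D(a,r)=\{x:|x-a|\le r\}$, $\zeta_G=\zeta_{D(0,1)}$. Let $\mathcal{O},\mathfrak{m},k$ be the valuation ring, maximal ideal, residue field. For a type II point $P=\gamma(\zeta_G)$, $\gamma\in\mathrm{PGL}_2(K)$, the reduction $\tilde\varphi_P$ is the reduction mod $\mathfrak{m}$ of a normalized lift (coefficients in $\mathcal{O}$, one a unit) of $\gamma^{-1}\circ\varphi\circ\gamma$, after cancelling common factors; $P$ is fixed by $\varphi$ iff $\tilde\varphi_P$ is nonconstant. $\Gamma_{\mathrm{Fix}}$ is the tree spanned by the classical fixed points; $\Gamma_{\mathrm{Fix,Repel}}$ the tree spanned by classical fixed points and type II fixed points with $\deg\tilde\varphi_P\ge2$,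 $v(P)$ the valence there. Weight $w_\varphi(P)$: for type II fixed $P$, $\deg\tilde\varphi_P-1+N(P)$, $N(P)$ the number of tangent directions at $P$ containing classical fixed points that are moved by $\varphi_*$; for a branch point of $\Gamma_{\mathrm{Fix}}$ moved by $\varphi$, $v(P)-2$; else $0$. For degree 2 exactly one point has positive weight, equal to 1. (W1): $P$ fixed with $\deg\tilde\varphi_P\ge2$. (W3): $P$ fixed, $\tilde\varphi_P$ conjugate over $k$ to $z+\tilde a$, $\tilde a\in k^\times$, and $P\in\Gamma_{\mathrm{Fix}}$. *)

theory Defs
  imports Complex_Main "HOL-Computational_Algebra.Polynomial"
begin

definition nonarch_abs :: "('k::field \<Rightarrow> real) \<Rightarrow> bool" where
  "nonarch_abs av \<longleftrightarrow>
     (\<forall>x. 0 \<le> av x) \<and> (\<forall>x. av x = 0 \<longleftrightarrow> x = 0) \<and>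
     (\<forall>x y. av (x * y) = av x * av y) \<and>
     (\<forall>x y. av (x + y) \<le> max (av x) (av y))"

definition complete_abs :: "('k::field \<Rightarrow> real) \<Rightarrow> bool" where
  "complete_abs av \<longleftrightarrow>
     (\<forall>X :: nat \<Rightarrow> 'k.
        (\<forall>e>0. \<exists>N. \<forall>m\<ge>N. \<forall>n\<ge>N. av (X m - X n) < e) \<longrightarrow>
        (\<exists>L. \<forall>e>0. \<exists>N. \<forall>n\<ge>N. av (X n - L) < e))"

definition alg_closed :: "'k::field itself \<Rightarrow> bool" where
  "alg_closed _ \<longleftrightarrow> (\<forall>p :: 'k poly. 1 \<le> degree p \<longrightarrow> (\<exists>x. poly p x = 0))"

text \<open>A presentation of the residue field k = O/m: a map red : K -> k whose restriction
  to the valuation ring O = {|x| <= 1} is a surjective ring homomorphism with kernel m.\<close>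
definition residue_map :: "('k::field \<Rightarrow> real) \<Rightarrow> ('k \<Rightarrow> 'r::field) \<Rightarrow> bool" where
  "residue_map av red \<longleftrightarrow>
     (\<forall>x y. av x \<le> 1 \<longrightarrow> av y \<le> 1 \<longrightarrow>
         red (x + y) = red x + red y \<and> red (x * y) = red x * red y) \<and>
     red 0 = 0 \<and> red 1 = 1 \<and>
     (\<forall>x. av x \<le> 1 \<longrightarrow> (red x = 0 \<longleftrightarrow> av x < 1)) \<and>
     (\<forall>z. \<exists>x. av x \<le> 1 \<and> red x = z)"

definition value_group :: "('k::field \<Rightarrow> real) \<Rightarrow> real set" where
  "value_group av = {av c | c. c \<noteq> 0}"

definition disc :: "('k::field \<Rightarrow> real) \<Rightarrow> 'k \<Rightarrow> real \<Rightarrow> 'k set" where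
  "disc av a r = {x. av (x - a) \<le> r}"

text \<open>The type II point zeta_{D(a,r)} is represented by the disc D(a,r), r in |K^x|.\<close>
definition typeII :: "('k::field \<Rightarrow> real) \<Rightarrow> 'k set set" where
  "typeII av = {disc av a r | a r. r \<in> value_group av}"

definition zeta_G :: "('k::field \<Rightarrow> real) \<Rightarrow> 'k set" where
  "zeta_G av = disc av 0 1"

text \<open>An affine chart gamma(z) = a + c z with gamma(zeta_G) = P.\<close>
definition chart :: "('k::field \<Rightarrow> real) \<Rightarrow> 'k set \<Rightarrow> 'k \<times> 'k" where
  "chart av P = (SOME (a, c). c \<noteq> 0 \<and> P = disc av a (av c))"

text \<open>A rational map F/G is given by a pair of polynomials (F, G) (coprime);
  its homogeneous lift has the same coefficients.\<close>
type_synonym 'a ratmap = "'a poly \<times> 'a poly"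

definition phi_map :: "'k::field \<Rightarrow> 'k ratmap" where
  "phi_map s = ([:1, s, 1:], [:0, 1:])"   \<comment> \<open>z + s + 1/z = (z^2 + s z + 1)/z\<close>

text \<open>gamma^{-1} o Phi o gamma for gamma(z) = a + c z.\<close>
definition conj_affine :: "'k::field \<Rightarrow> 'k \<Rightarrow> 'k ratmap \<Rightarrow> 'k ratmap" where
  "conj_affine a c \<Phi> =
     (pcompose (fst \<Phi>) [:a, c:] - smult a (pcompose (snd \<Phi>) [:a, c:]),
      smult c (pcompose (snd \<Phi>) [:a, c:]))"

definition normalize_lift :: "('k::field \<Rightarrow> real) \<Rightarrow> 'k ratmap \<Rightarrow> 'k ratmap" where
  "normalize_lift av \<Phi> =
     (let C = set (coeffs (fst \<Phi>)) \<union> set (coeffs (snd \<Phi>));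
          M = Max (av ` C);
          e = (SOME e. e \<in> C \<and> av e = M)
      in (smult (inverse e) (fst \<Phi>), smult (inverse e) (snd \<Phi>)))"

definition lowest_terms :: "'r::field ratmap \<Rightarrow> 'r ratmap" where
  "lowest_terms \<Phi> = (SOME \<Psi>. coprime (fst \<Psi>) (snd \<Psi>) \<and> (fst \<Psi> \<noteq> 0 \<or> snd \<Psi> \<noteq> 0) \<and>
                         fst \<Phi> * snd \<Psi> = fst \<Psi> * snd \<Phi>)"

definition reduction :: "('k::field \<Rightarrow> real) \<Rightarrow> ('k \<Rightarrow> 'r::field) \<Rightarrow> 'k ratmap \<Rightarrow> 'k set \<Rightarrow> 'r ratmap" where
  "reduction av red \<Phi> P =
     (case chart av P of (a, c) \<Rightarrow>
        (let L = normalize_lift av (conj_affine a c \<Phi>)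
         in lowest_terms (map_poly red (fst L), map_poly red (snd L))))"

definition rat_deg :: "'a::zero ratmap \<Rightarrow> nat" where
  "rat_deg \<Psi> = max (degree (fst \<Psi>)) (degree (snd \<Psi>))"

definition red_deg :: "('k::field \<Rightarrow> real) \<Rightarrow> ('k \<Rightarrow> 'r::field) \<Rightarrow> 'k ratmap \<Rightarrow> 'k set \<Rightarrow> nat" where
  "red_deg av red \<Phi> P = rat_deg (reduction av red \<Phi> P)"

text \<open>P is fixed iff the reduction is nonconstant.\<close>
definition is_fixed :: "('k::field \<Rightarrow> real) \<Rightarrow> ('k \<Rightarrow> 'r::field) \<Rightarrow> 'k ratmap \<Rightarrow> 'k set \<Rightarrow> bool" where
  "is_fixed av red \<Phi> P \<longleftrightarrow> P \<in> typeII av \<and> 1 \<le> red_deg av red \<Phi> P"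

text \<open>Action of a rational map (in lowest terms) on P^1 = 'a option (None = infinity).\<close>
definition eval_P1 :: "'a::field ratmap \<Rightarrow> 'a option \<Rightarrow> 'a option" where
  "eval_P1 \<Psi> v = (case v of
      Some x \<Rightarrow> (if poly (snd \<Psi>) x = 0 then None
                 else Some (poly (fst \<Psi>) x / poly (snd \<Psi>) x))
    | None \<Rightarrow> (if snd \<Psi> = 0 \<or> degree (snd \<Psi>) < degree (fst \<Psi>) then None
              else if degree (fst \<Psi>) = degree (snd \<Psi>)
                   then Some (lead_coeff (fst \<Psi>) / lead_coeff (snd \<Psi>))
              else Some 0))"

definition fixed_classical :: "'k::field ratmap \<Rightarrow> 'k option set" where
  "fixed_classical \<Phi> =
     {Some z | z. poly (snd \<Phi>) z \<noteq> 0 \<and> poly (fst \<Phi>) z = z * poly (snd \<Phi>) z} \<union>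
     (if degree (snd \<Phi>) < degree (fst \<Phi>) then {None} else {})"

text \<open>Tangent directions at P = gamma(zeta_G) are labelled by P^1(k): the direction
  containing a classical point x is the reduction of gamma^{-1}(x).\<close>
definition direction :: "('k::field \<Rightarrow> real) \<Rightarrow> ('k \<Rightarrow> 'r::field) \<Rightarrow> 'k set \<Rightarrow> 'k option \<Rightarrow> 'r option" where
  "direction av red P x =
     (case chart av P of (a, c) \<Rightarrow>
        (case x of None \<Rightarrow> None
         | Some y \<Rightarrow> (if av (y - a) \<le> av c then Some (red ((y - a) / c)) else None)))"

definition fix_dirs :: "('k::field \<Rightarrow> real) \<Rightarrow> ('k \<Rightarrow> 'r::field) \<Rightarrow> 'k ratmap \<Rightarrow> 'k set \<Rightarrow> 'r option set" where
  "fix_dirs av red \<Phi> P = direction av red P ` fixed_classical \<Phi>"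

text \<open>A type II point lies in Gamma_Fix iff at least two of its directions contain classical
  fixed points; its valence in Gamma_Fix is the number of such directions.\<close>
definition in_Gamma_Fix :: "('k::field \<Rightarrow> real) \<Rightarrow> ('k \<Rightarrow> 'r::field) \<Rightarrow> 'k ratmap \<Rightarrow> 'k set \<Rightarrow> bool" where
  "in_Gamma_Fix av red \<Phi> P \<longleftrightarrow> P \<in> typeII av \<and> 2 \<le> card (fix_dirs av red \<Phi> P)"

definition valence_Fix :: "('k::field \<Rightarrow> real) \<Rightarrow> ('k \<Rightarrow> 'r::field) \<Rightarrow> 'k ratmap \<Rightarrow> 'k set \<Rightarrow> nat" where
  "valence_Fix av red \<Phi> P = card (fix_dirs av red \<Phi> P)"

text \<open>N(P): directions containing classical fixed points moved by phi_* (= reduction).\<close>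
definition N_moved :: "('k::field \<Rightarrow> real) \<Rightarrow> ('k \<Rightarrow> 'r::field) \<Rightarrow> 'k ratmap \<Rightarrow> 'k set \<Rightarrow> nat" where
  "N_moved av red \<Phi> P =
     card {v \<in> fix_dirs av red \<Phi> P. eval_P1 (reduction av red \<Phi> P) v \<noteq> v}"

definition weight :: "('k::field \<Rightarrow> real) \<Rightarrow> ('k \<Rightarrow> 'r::field) \<Rightarrow> 'k ratmap \<Rightarrow> 'k set \<Rightarrow> int" where
  "weight av red \<Phi> P =
     (if is_fixed av red \<Phi> P
      then int (red_deg av red \<Phi> P) - 1 + int (N_moved av red \<Phi> P)
      else if in_Gamma_Fix av red \<Phi> P \<and> 3 \<le> valence_Fix av red \<Phi> P
      then int (valence_Fix av red \<Phi> P) - 2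
      else 0)"

definition W1 :: "('k::field \<Rightarrow> real) \<Rightarrow> ('k \<Rightarrow> 'r::field) \<Rightarrow> 'k ratmap \<Rightarrow> 'k set \<Rightarrow> bool" where
  "W1 av red \<Phi> P \<longleftrightarrow> is_fixed av red \<Phi> P \<and> 2 \<le> red_deg av red \<Phi> P"

text \<open>(W3): the reduction is conjugate over k (by a Moebius map eta) to z + a, a <> 0.\<close>
definition W3 :: "('k::field \<Rightarrow> real) \<Rightarrow> ('k \<Rightarrow> 'r::field) \<Rightarrow> 'k ratmap \<Rightarrow> 'k set \<Rightarrow> bool" where
  "W3 av red \<Phi> P \<longleftrightarrow> is_fixed av red \<Phi> P \<and>
     (\<exists>t::'r. t \<noteq> 0 \<and> (\<exists>\<alpha> \<beta> \<gamma> \<delta>. \<alpha> * \<delta> - \<beta> * \<gamma> \<noteq> 0 \<and>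
        (\<forall>v. eval_P1 (reduction av red \<Phi> P) (eval_P1 ([:\<beta>, \<alpha>:], [:\<delta>, \<gamma>:]) v)
             = eval_P1 ([:\<beta>, \<alpha>:], [:\<delta>, \<gamma>:]) (eval_P1 ([:t, 1:], [:1:]) v)))) \<and>
     in_Gamma_Fix av red \<Phi> P"

end

theory Submission
  imports Defs
begin

(* Conjugating by z = a + c z' with |a|, |s| <= |c| and |c| >= 1 and dividing by c^2 gives the
   normalized lift ((z + a/c)(z + s/c) + 1/c^2, z + a/c).  On the Gauss point (|c| = 1) the
   constant 1/c^2 survives reduction, so the reduction has degree 2; the nonzero classical fixed
   point -1/s lies in a direction that the reduction fixes, so the weight is 2 - 1 + 0 = 1 and (W1)
   holds.  When |l3| > 1 we have |s| = sqrt |l3| > 1; on the disc of radius |s| the constant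
   vanishes mod m, the common factor z + a/c cancels, and the reduction is the translation
   z + red(s/c) with red(s/c) <> 0.  It fixes the direction of infinity and moves that of -1/s,
   so the weight is 1 - 1 + 1 = 1 and (W3) holds.  Uniqueness of the weight-1 point identifies xi. *)

(* Coprimality is supplied as a Bezout identity, since 'a poly over an arbitrary field has no
   gcd instance. *)
lemma lowest_terms_mult_cancel:
  fixes N D h x y :: "'a::field poly"
  assumes bezout: "N * x + D * y = 1" and "N \<noteq> 0" "h \<noteq> 0"
  obtains v where "v \<noteq> 0" "lowest_terms (h * N, h * D) = (smult v N, smult v D)"
proof -
  let ?P = "\<lambda>\<Psi>. coprime (fst \<Psi>) (snd \<Psi>) \<and> (fst \<Psi> \<noteq> 0 \<or> snd \<Psi> \<noteq> 0) \<and>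
                 h * N * snd \<Psi> = fst \<Psi> * (h * D)"
  have "coprime N D"
  proof (rule coprimeI)
    fix c assume "c dvd N" "c dvd D"
    then have "c dvd N * x + D * y"
      by simp
    then show "is_unit c"
      using bezout by simp
  qed
  then have "?P (N, D)"
    using assms by (simp add: algebra_simps)
  then have "?P (SOME \<Psi>. ?P \<Psi>)"
    by (rule someI)
  moreover have "lowest_terms (h * N, h * D) = (SOME \<Psi>. ?P \<Psi>)"
    by (simp add: lowest_terms_def)
  ultimately obtain A B where AB: "lowest_terms (h * N, h * D) = (A, B)" "coprime A B" "N * B = A * D"
    using assms(3) by (cases "lowest_terms (h * N, h * D)") (auto simp: algebra_simps)
  have "A = A * (N * x + D * y)"
    by (simp add: bezout)
  also have "\<dots> = N * (A * x) + (A * D) * y"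
    by (simp add: algebra_simps)
  also have "\<dots> = N * (A * x + B * y)"
    by (simp add: AB(3)[symmetric] algebra_simps)
  finally obtain k where k: "A = N * k" ..
  then have "B = k * D"
    using AB(3) assms(2) by (simp add: algebra_simps)
  have "is_unit k"
    by (rule coprime_common_divisor[OF AB(2)]) (simp_all add: k \<open>B = k * D\<close>)
  then obtain v where "v \<noteq> 0" "k = [:v:]"
    by (auto simp: is_unit_poly_iff dvd_field_iff)
  with AB(1) k \<open>B = k * D\<close> that show ?thesis
    by (simp add: mult.commute)
qed

lemma rat_deg_smult:
  fixes N D :: "'a::field poly"
  shows "v \<noteq> 0 \<Longrightarrow> rat_deg (smult v N, smult v D) = rat_deg (N, D)"
  by (simp add: rat_deg_def)

lemma eval_P1_smult:
  fixes N D :: "'a::field poly"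
  shows "v \<noteq> 0 \<Longrightarrow> eval_P1 (smult v N, smult v D) = eval_P1 (N, D)"
  by (simp add: eval_P1_def fun_eq_iff split: option.splits)

lemma eval_P1_id: "eval_P1 ([:0, 1:], [:1:]) v = v"
  by (cases v) (simp_all add: eval_P1_def)

lemma W3_of_translation:
  fixes t :: "'r::field"
  assumes "is_fixed av red \<Phi> P" "t \<noteq> 0"
    and translation: "eval_P1 (reduction av red \<Phi> P) = eval_P1 ([:t, 1:], [:1:])"
    and "in_Gamma_Fix av red \<Phi> P"
  shows "W3 av red \<Phi> P"
proof -
  have "\<exists>\<alpha> \<beta> \<gamma> \<delta>. \<alpha> * \<delta> - \<beta> * \<gamma> \<noteq> 0 \<and>
      (\<forall>v. eval_P1 (reduction av red \<Phi> P) (eval_P1 ([:\<beta>, \<alpha>:], [:\<delta>, \<gamma>:]) v) =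
           eval_P1 ([:\<beta>, \<alpha>:], [:\<delta>, \<gamma>:]) (eval_P1 ([:t, 1:], [:1:]) v))"
    by (intro exI[of _ 1] exI[of _ 0]) (simp add: translation eval_P1_id)
  with assms show ?thesis
    unfolding W3_def by blast
qed

lemma conj_affine_phi:
  fixes a c s :: "'k::field"
  assumes "c \<noteq> 0"
  shows "conj_affine a c (phi_map s) =
    (smult (c^2) [:a/c * (s/c) + inverse (c^2), a/c + s/c, 1:], smult (c^2) [:a/c, 1:])"
  using assms by (simp add: conj_affine_def phi_map_def pcompose_pCons field_simps power2_eq_square)

lemma fixed_classical_phi:
  "fixed_classical (phi_map s) = insert None (if s = 0 then {} else {Some (- inverse s)})"
proof -
  have "(z \<noteq> 0 \<and> 1 + z * (s + z) = z * z) \<longleftrightarrow> (s \<noteq> 0 \<and> z = - inverse s)" for z :: 'a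
  proof -
    have "1 + z * (s + z) = z * z \<longleftrightarrow> s * z = -1"
      by (auto simp: algebra_simps eq_neg_iff_add_eq_0)
    then show ?thesis
      by (cases "s = 0") (auto simp: field_simps)
  qed
  then show ?thesis
    by (auto simp: fixed_classical_def phi_map_def algebra_simps)
qed

locale nonarch_valued_field =
  fixes av :: "'k::field \<Rightarrow> real"
  assumes nonarch_abs: "nonarch_abs av"
begin

lemma av_nonneg: "0 \<le> av x"
  using nonarch_abs by (simp add: nonarch_abs_def)

lemma av_eq_0_iff [simp]: "av x = 0 \<longleftrightarrow> x = 0"
  using nonarch_abs by (simp add: nonarch_abs_def)

lemma av_mult: "av (x * y) = av x * av y"
  using nonarch_abs by (simp add: nonarch_abs_def)

lemma av_add_le: "av (x + y) \<le> max (av x) (av y)"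
  using nonarch_abs by (simp add: nonarch_abs_def)

lemma av_0 [simp]: "av 0 = 0"
  by simp

lemma av_1 [simp]: "av 1 = 1"
  using av_mult[of 1 1] by simp

lemma av_uminus [simp]: "av (- x) = av x"
proof -
  have "av (-1) * av (-1) = 1"
    using av_mult[of "-1" "-1"] by simp
  then have "av (-1) = 1"
    using av_nonneg[of "-1"] by (auto simp: square_eq_1_iff)
  then show ?thesis
    using av_mult[of "-1" x] by simp
qed

lemma av_diff_le: "av (x - y) \<le> max (av x) (av y)"
  using av_add_le[of x "- y"] by simp

lemma av_inverse: "av (inverse x) = inverse (av x)"
proof (cases "x = 0")
  case False
  then have "av x * av (inverse x) = 1"
    by (simp flip: av_mult)
  then show ?thesis
    by (simp add: inverse_unique)
qed simp

lemma av_divide: "av (x / y) = av x / av y"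
  by (simp add: divide_inverse av_mult av_inverse)

lemma av_power: "av (x ^ n) = av x ^ n"
  by (induction n) (simp_all add: av_mult)

lemma av_add_eq_right:
  assumes "av x < av y" shows "av (x + y) = av y"
proof -
  have "av y \<le> max (av (x + y)) (av x)"
    using av_diff_le[of "x + y" x] by simp
  with assms av_add_le[of x y] show ?thesis by auto
qed

lemma av_mult_le_1: "av x \<le> 1 \<Longrightarrow> av y \<le> 1 \<Longrightarrow> av (x * y) \<le> 1"
  by (simp add: av_mult av_nonneg mult_le_one)

lemma av_add_le_1: "av x \<le> 1 \<Longrightarrow> av y \<le> 1 \<Longrightarrow> av (x + y) \<le> 1"
  using av_add_le[of x y] by simp

lemma av_divide_le_1: "av x \<le> av y \<Longrightarrow> y \<noteq> 0 \<Longrightarrow> av (x / y) \<le> 1"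
  using av_nonneg[of y] by (simp add: av_divide divide_le_eq_1 order_less_le)

lemma av_inverse_power2_le_1: "1 \<le> av c \<Longrightarrow> av (inverse (c^2)) \<le> 1"
  by (simp add: av_inverse av_power inverse_le_1_iff one_le_power)

lemma disc_in_typeII: "w \<noteq> 0 \<Longrightarrow> disc av b (av w) \<in> typeII av"
  unfolding typeII_def value_group_def by blast

lemma chart_disc:
  assumes "w \<noteq> 0"
  obtains a c where "chart av (disc av b (av w)) = (a, c)" "c \<noteq> 0" "av c = av w" "av (a - b) \<le> av w"
proof -
  let ?Q = "\<lambda>(a, c). c \<noteq> 0 \<and> disc av b (av w) = disc av a (av c)"
  have "?Q (b, w)"
    using assms by simp
  then have "?Q (chart av (disc av b (av w)))"
    unfolding chart_def by (rule someI)
  then obtain a c where ac: "chart av (disc av b (av w)) = (a, c)" "c \<noteq> 0"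
    and mem: "\<And>x. av (x - b) \<le> av w \<longleftrightarrow> av (x - a) \<le> av c"
    by (auto simp: disc_def set_eq_iff split: prod.splits)
  have ab: "av (a - b) \<le> av w" and ba: "av (b - a) \<le> av c"
    using mem[of a] mem[of b] av_nonneg[of c] av_nonneg[of w] by auto
  have "av w \<le> max (av (b + w - a)) (av (b - a))"
    using av_diff_le[of "b + w - a" "b - a"] by simp
  moreover have "av (b + w - a) \<le> av c"
    using mem[of "b + w"] by simp
  moreover have "av c \<le> max (av (a + c - b)) (av (a - b))"
    using av_diff_le[of "a + c - b" "a - b"] by simp
  moreover have "av (a + c - b) \<le> av w"
    using mem[of "a + c"] by simp
  ultimately have "av c = av w"
    using ab ba by linarith
  with ac ab that show ?thesis by blast
qed

lemma zeta_G_in_typeII: "zeta_G av \<in> typeII av"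
  using disc_in_typeII[of 1 0] by (simp add: zeta_G_def)

lemma av_root_one_minus:
  assumes "s^2 = 1 - l"
  shows "av l \<le> 1 \<Longrightarrow> av s \<le> 1" and "1 < av l \<Longrightarrow> av s = sqrt (av l)"
proof -
  have sq: "av s ^ 2 = av (1 - l)"
    by (simp add: assms av_power[symmetric])
  show "av s \<le> 1" if "av l \<le> 1"
  proof -
    have "av s ^ 2 \<le> 1"
      using sq av_diff_le[of 1 l] that by simp
    then show ?thesis
      using av_nonneg[of s] by (simp add: power_le_one_iff)
  qed
  show "av s = sqrt (av l)" if "1 < av l"
  proof -
    have "av (1 + - l) = av l"
      using av_add_eq_right[of 1 "- l"] that by simp
    then have "av s ^ 2 = av l"
      using sq by simp
    then show ?thesis
      using av_nonneg[of s] by (metis real_sqrt_unique)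
  qed
qed

lemma normalize_lift_smult:
  fixes F G :: "'k poly"
  assumes "m \<noteq> 0" and F: "\<And>i. av (coeff F i) \<le> 1" and G: "\<And>i. av (coeff G i) \<le> 1"
    and j: "av (coeff F j) = 1"
  obtains v where "av v = 1" "normalize_lift av (smult m F, smult m G) = (smult v F, smult v G)"
proof -
  define C where "C = set (coeffs (smult m F)) \<union> set (coeffs (smult m G))"
  have bound: "av (m * x) \<le> av m" if "av x \<le> 1" for x
    using that by (simp add: av_mult av_nonneg mult_left_le)
  have le: "\<forall>y \<in> av ` C. y \<le> av m"
  proof
    fix y assume "y \<in> av ` C"
    then obtain x where x: "x \<in> C" "y = av x"
      by blast
    then have "x \<in> range (coeff (smult m F)) \<union> range (coeff (smult m G))"
      unfolding C_def range_coeff by blast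
    then obtain i where "x = m * coeff F i \<or> x = m * coeff G i"
      by auto
    then show "y \<le> av m"
      using bound F G x(2) by auto
  qed
  have "coeff (smult m F) j \<noteq> 0"
    using j assms(1) by auto
  then have "coeff (smult m F) j \<in> set (coeffs (smult m F))"
    by (intro coeff_in_coeffs le_degree) auto
  then have inC: "coeff (smult m F) j \<in> C"
    unfolding C_def by blast
  have avj: "av (coeff (smult m F) j) = av m"
    using j by (simp add: av_mult)
  have "finite (av ` C)"
    by (simp add: C_def)
  moreover have "av m \<in> av ` C"
    using inC avj by (metis image_eqI)
  ultimately have Max: "Max (av ` C) = av m"
    using le by (intro Max_eqI) auto
  define e where "e = (SOME e. e \<in> C \<and> av e = Max (av ` C))"
  have "e \<in> C \<and> av e = Max (av ` C)"
    unfolding e_def by (rule someI[of _ "coeff (smult m F) j"]) (use inC Max avj in simp)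
  then have "av e = av m"
    using Max by simp
  then have "av (inverse e * m) = 1"
    using assms(1) by (simp add: av_mult av_inverse)
  moreover have "normalize_lift av (smult m F, smult m G) = (smult (inverse e * m) F, smult (inverse e * m) G)"
    by (simp add: normalize_lift_def Let_def e_def C_def)
  ultimately show ?thesis using that by blast
qed


lemma normalize_lift_conj_phi:
  assumes "c \<noteq> 0" "av a \<le> av c" "av s \<le> av c" "1 \<le> av c"
  defines "\<alpha> \<equiv> a/c" and "\<sigma> \<equiv> s/c" and "t \<equiv> inverse (c^2)"
  obtains v where "av v = 1" "normalize_lift av (conj_affine a c (phi_map s)) =
    (smult v [:\<alpha> * \<sigma> + t, \<alpha> + \<sigma>, 1:], smult v [:\<alpha>, 1:])"
proof -
  define F G where "F = [:\<alpha> * \<sigma> + t, \<alpha> + \<sigma>, 1:]" and "G = [:\<alpha>, 1:]"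
  have "av \<alpha> \<le> 1" "av \<sigma> \<le> 1" "av t \<le> 1"
    using assms by (simp_all add: av_divide_le_1 av_inverse_power2_le_1)
  then have F: "av (coeff F i) \<le> 1" and G: "av (coeff G i) \<le> 1" for i
    by (simp_all add: F_def G_def coeff_pCons av_mult_le_1 av_add_le_1 split: nat.split)
  have "av (coeff F 2) = 1"
    by (simp add: F_def numeral_2_eq_2)
  then obtain v where "av v = 1"
    "normalize_lift av (smult (c^2) F, smult (c^2) G) = (smult v F, smult v G)"
    using normalize_lift_smult[OF _ F G] \<open>c \<noteq> 0\<close> by (metis power_not_zero)
  then show ?thesis
    using that conj_affine_phi[OF \<open>c \<noteq> 0\<close>] by (simp add: F_def G_def \<alpha>_def \<sigma>_def t_def)
qed
end

locale residue_field = nonarch_valued_field av for av :: "'k::field \<Rightarrow> real" +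
  fixes red :: "'k \<Rightarrow> 'r::field"
  assumes residue_map: "residue_map av red"
begin

lemma red_add: "av x \<le> 1 \<Longrightarrow> av y \<le> 1 \<Longrightarrow> red (x + y) = red x + red y"
  using residue_map by (simp add: residue_map_def)

lemma red_mult: "av x \<le> 1 \<Longrightarrow> av y \<le> 1 \<Longrightarrow> red (x * y) = red x * red y"
  using residue_map by (simp add: residue_map_def)

lemma red_0 [simp]: "red 0 = 0"
  using residue_map by (simp add: residue_map_def)

lemma red_1 [simp]: "red 1 = 1"
  using residue_map by (simp add: residue_map_def)

lemma red_eq_0_iff: "av x \<le> 1 \<Longrightarrow> red x = 0 \<longleftrightarrow> av x < 1"
  using residue_map by (simp add: residue_map_def)

lemma red_uminus: "av x \<le> 1 \<Longrightarrow> red (- x) = - red x"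
  using red_add[of x "- x"] by (simp add: eq_neg_iff_add_eq_0 add.commute)

lemma map_poly_red_smult:
  assumes "av v \<le> 1" "\<And>i. av (coeff p i) \<le> 1"
  shows "map_poly red (smult v p) = smult (red v) (map_poly red p)"
  by (rule poly_eqI) (simp add: coeff_map_poly red_mult assms)

end

lemma fix_dirs_phi:
  "fix_dirs av red (phi_map s) P =
     insert None (if s = 0 then {} else {direction av red P (Some (- inverse s))})"
  by (auto simp: fix_dirs_def fixed_classical_phi direction_def split: prod.splits)

context residue_field
begin

lemma reduction_phi:
  assumes chart: "chart av P = (a, c)" and "c \<noteq> 0" "av a \<le> av c" "av s \<le> av c" "1 \<le> av c"
  obtains u where "u \<noteq> 0"
    "reduction av red (phi_map s) P =
       lowest_terms (smult u [:red (a/c) * red (s/c) + red (inverse (c^2)), red (a/c) + red (s/c), 1:],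
                     smult u [:red (a/c), 1:])"
proof -
  define \<alpha> \<sigma> t where "\<alpha> = a/c" and "\<sigma> = s/c" and "t = inverse (c^2)"
  have \<alpha>1: "av \<alpha> \<le> 1" and \<sigma>1: "av \<sigma> \<le> 1" and t1: "av t \<le> 1"
    using assms by (simp_all add: \<alpha>_def \<sigma>_def t_def av_divide_le_1 av_inverse_power2_le_1)
  define F G where "F = [:\<alpha> * \<sigma> + t, \<alpha> + \<sigma>, 1:]" and "G = [:\<alpha>, 1:]"
  have F: "av (coeff F i) \<le> 1" and G: "av (coeff G i) \<le> 1" for i
    using \<alpha>1 \<sigma>1 t1 by (simp_all add: F_def G_def coeff_pCons av_mult_le_1 av_add_le_1 split: nat.split)
  obtain v where v: "av v = 1"
    "normalize_lift av (conj_affine a c (phi_map s)) = (smult v F, smult v G)"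
    using normalize_lift_conj_phi[OF assms(2-)] by (auto simp: F_def G_def \<alpha>_def \<sigma>_def t_def)
  have "red (\<alpha> * \<sigma> + t) = red \<alpha> * red \<sigma> + red t" "red (\<alpha> + \<sigma>) = red \<alpha> + red \<sigma>"
    using \<alpha>1 \<sigma>1 t1 by (simp_all add: red_add red_mult av_mult_le_1)
  then have "map_poly red F = [:red \<alpha> * red \<sigma> + red t, red \<alpha> + red \<sigma>, 1:]"
    "map_poly red G = [:red \<alpha>, 1:]"
    by (simp_all add: F_def G_def map_poly_pCons)
  moreover have "red v \<noteq> 0"
    using v(1) red_eq_0_iff[of v] by simp
  ultimately show ?thesis
    using that v chart map_poly_red_smult[of v F] map_poly_red_smult[of v G] F G
    by (simp add: reduction_def \<alpha>_def \<sigma>_def t_def)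
qed

lemma direction_fixed_point_phi:
  assumes chart: "chart av P = (a, c)" and "c \<noteq> 0"
    and a: "av a \<le> av c" and s: "av s \<le> av c" and c: "1 \<le> av c" and "s \<noteq> 0"
    and dir: "direction av red P (Some (- inverse s)) = Some w"
  shows "red (s/c) * (red (a/c) + w) = - red (inverse (c^2))"
proof -
  define q where "q = (- inverse s - a) / c"
  have "av (- inverse s - a) \<le> av c" and w: "w = red q"
    using dir chart by (auto simp: direction_def q_def split: if_splits)
  then have q1: "av q \<le> 1"
    using \<open>c \<noteq> 0\<close> by (simp add: q_def av_divide_le_1)
  have \<alpha>1: "av (a/c) \<le> 1" and \<sigma>1: "av (s/c) \<le> 1" and t1: "av (inverse (c^2)) \<le> 1"
    using a s c \<open>c \<noteq> 0\<close> by (simp_all add: av_divide_le_1 av_inverse_power2_le_1)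
  have "s/c * (a/c + q) = - inverse (c^2)"
    using \<open>c \<noteq> 0\<close> \<open>s \<noteq> 0\<close> by (simp add: q_def field_simps power2_eq_square)
  then have "red (s/c * (a/c + q)) = - red (inverse (c^2))"
    using red_uminus[OF t1] by simp
  moreover have "red (s/c * (a/c + q)) = red (s/c) * (red (a/c) + w)"
    unfolding w using \<alpha>1 \<sigma>1 q1 by (simp only: red_mult red_add av_add_le_1)
  ultimately show ?thesis
    by simp
qed

lemma reduction_phi_degree_two:
  assumes chart: "chart av P = (a, c)" and "c \<noteq> 0" and "av a \<le> 1" "av s \<le> 1" "av c = 1"
  defines "\<alpha> \<equiv> red (a/c)" and "\<sigma> \<equiv> red (s/c)" and "\<tau> \<equiv> red (inverse (c^2))"
  shows "\<tau> \<noteq> 0" "red_deg av red (phi_map s) P = 2"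
    "eval_P1 (reduction av red (phi_map s) P) = eval_P1 ([:\<alpha> * \<sigma> + \<tau>, \<alpha> + \<sigma>, 1:], [:\<alpha>, 1:])"
proof -
  define N D where "N = [:\<alpha> * \<sigma> + \<tau>, \<alpha> + \<sigma>, 1:]" and "D = [:\<alpha>, 1:]"
  show "\<tau> \<noteq> 0"
    using assms red_eq_0_iff[of "inverse (c^2)"] by (simp add: av_inverse av_power)
  obtain u where u: "u \<noteq> 0" "reduction av red (phi_map s) P = lowest_terms (smult u N, smult u D)"
    by (rule reduction_phi[OF chart \<open>c \<noteq> 0\<close>, where s = s])
      (use assms in \<open>simp_all add: N_def D_def \<alpha>_def \<sigma>_def \<tau>_def\<close>)
  have "N = [:\<sigma>, 1:] * D + [:\<tau>:]"
    by (simp add: N_def D_def algebra_simps)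
  then have bezout: "N * [:inverse \<tau>:] + D * smult (- inverse \<tau>) [:\<sigma>, 1:] = 1"
    using \<open>\<tau> \<noteq> 0\<close> by (simp add: algebra_simps)
  have "N \<noteq> 0"
    by (simp add: N_def)
  then obtain v where "v \<noteq> 0" "reduction av red (phi_map s) P = (smult v N, smult v D)"
    using lowest_terms_mult_cancel[OF bezout _, of "[:u:]"] u by auto
  then have "red_deg av red (phi_map s) P = rat_deg (N, D)"
    "eval_P1 (reduction av red (phi_map s) P) = eval_P1 (N, D)"
    by (simp_all add: red_deg_def rat_deg_smult eval_P1_smult)
  then show "red_deg av red (phi_map s) P = 2" "eval_P1 (reduction av red (phi_map s) P) = eval_P1 (N, D)"
    by (simp_all add: rat_deg_def N_def D_def)
qed

lemma red_inverse_power2_eq_0: "1 < av c \<Longrightarrow> red (inverse (c^2)) = 0"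
  using red_eq_0_iff[of "inverse (c^2)"]
  by (simp add: av_inverse av_power inverse_le_1_iff inverse_less_1_iff one_less_power)

lemma reduction_phi_translation:
  assumes chart: "chart av P = (a, c)" and "c \<noteq> 0" and "av a \<le> av c" "av c = av s" "1 < av s"
  defines "\<sigma> \<equiv> red (s/c)"
  shows "\<sigma> \<noteq> 0" "red_deg av red (phi_map s) P = 1"
    "eval_P1 (reduction av red (phi_map s) P) = eval_P1 ([:\<sigma>, 1:], [:1:])"
proof -
  define \<alpha> N D where "\<alpha> = red (a/c)" and "N = [:\<sigma>, 1:]" and "D = [:1 :: 'r:]"
  have "s \<noteq> 0"
    using \<open>1 < av s\<close> by auto
  then show "\<sigma> \<noteq> 0"
    using assms red_eq_0_iff[of "s/c"] by (simp add: av_divide)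
  have "red (inverse (c^2)) = 0"
    using assms by (simp add: red_inverse_power2_eq_0)
  obtain u where "u \<noteq> 0" "reduction av red (phi_map s) P =
      lowest_terms (smult u [:\<alpha> * \<sigma>, \<alpha> + \<sigma>, 1:], smult u [:\<alpha>, 1:])"
    by (rule reduction_phi[OF chart \<open>c \<noteq> 0\<close>, where s = s])
      (use assms \<open>red (inverse (c^2)) = 0\<close> in \<open>simp_all add: \<alpha>_def\<close>)
  moreover have "smult u [:\<alpha> * \<sigma>, \<alpha> + \<sigma>, 1:] = [:u * \<alpha>, u:] * N"
    "smult u [:\<alpha>, 1:] = [:u * \<alpha>, u:] * D"
    by (simp_all add: N_def D_def algebra_simps)
  ultimately have "reduction av red (phi_map s) P = lowest_terms ([:u * \<alpha>, u:] * N, [:u * \<alpha>, u:] * D)"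
    by (simp only:)
  moreover have "[:u * \<alpha>, u:] \<noteq> 0"
    using \<open>u \<noteq> 0\<close> by simp
  moreover have bezout: "N * 0 + D * 1 = 1" and "N \<noteq> 0"
    by (simp_all add: N_def D_def one_pCons)
  ultimately obtain v where "v \<noteq> 0" "reduction av red (phi_map s) P = (smult v N, smult v D)"
    using lowest_terms_mult_cancel[OF bezout \<open>N \<noteq> 0\<close>] by metis
  then have "red_deg av red (phi_map s) P = rat_deg (N, D)"
    "eval_P1 (reduction av red (phi_map s) P) = eval_P1 (N, D)"
    by (simp_all add: red_deg_def rat_deg_smult eval_P1_smult)
  then show "red_deg av red (phi_map s) P = 1" "eval_P1 (reduction av red (phi_map s) P) = eval_P1 (N, D)"
    by (simp_all add: rat_deg_def N_def D_def)
qed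

lemma weight_zeta_G_phi:
  assumes s: "av s \<le> 1"
  shows "weight av red (phi_map s) (zeta_G av) = 1" "W1 av red (phi_map s) (zeta_G av)"
proof -
  obtain a c where ch: "chart av (zeta_G av) = (a, c)" "c \<noteq> 0" "av c = 1" "av a \<le> 1"
    using chart_disc[of 1 0] by (auto simp: zeta_G_def)
  define \<alpha> \<sigma> \<tau> where "\<alpha> = red (a/c)" and "\<sigma> = red (s/c)" and "\<tau> = red (inverse (c^2))"
  define N D where "N = [:\<alpha> * \<sigma> + \<tau>, \<alpha> + \<sigma>, 1:]" and "D = [:\<alpha>, 1:]"
  have "\<tau> \<noteq> 0" and deg: "red_deg av red (phi_map s) (zeta_G av) = 2"
    and eval: "eval_P1 (reduction av red (phi_map s) (zeta_G av)) = eval_P1 (N, D)"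
    using reduction_phi_degree_two[OF ch(1,2,4) s ch(3)] by (simp_all add: \<alpha>_def \<sigma>_def \<tau>_def N_def D_def)
  have "eval_P1 (N, D) d = d" if "d \<in> fix_dirs av red (phi_map s) (zeta_G av)" for d
  proof (cases d)
    case None
    then show ?thesis
      by (simp add: eval_P1_def N_def D_def)
  next
    case (Some w)
    with that have "s \<noteq> 0" "direction av red (zeta_G av) (Some (- inverse s)) = Some w"
      by (auto simp: fix_dirs_phi split: if_splits)
    then have "\<sigma> * (\<alpha> + w) = - \<tau>"
      using direction_fixed_point_phi[OF ch(1,2)] ch s by (simp add: \<alpha>_def \<sigma>_def \<tau>_def)
    moreover have "poly N w = w * poly D w + (\<sigma> * (\<alpha> + w) + \<tau>)"
      by (simp add: N_def D_def algebra_simps)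
    ultimately have "poly D w \<noteq> 0" "poly N w = w * poly D w"
      using \<open>\<tau> \<noteq> 0\<close> by (auto simp: D_def)
    then show ?thesis
      using Some by (simp add: eval_P1_def)
  qed
  then have "{d \<in> fix_dirs av red (phi_map s) (zeta_G av). eval_P1 (N, D) d \<noteq> d} = {}"
    by blast
  then have "N_moved av red (phi_map s) (zeta_G av) = 0"
    by (simp only: N_moved_def eval card.empty)
  then show "weight av red (phi_map s) (zeta_G av) = 1" "W1 av red (phi_map s) (zeta_G av)"
    using zeta_G_in_typeII deg by (simp_all add: weight_def W1_def is_fixed_def)
qed

lemma weight_disc_phi:
  assumes s: "1 < av s"
  shows "disc av 0 (av s) \<in> typeII av" "weight av red (phi_map s) (disc av 0 (av s)) = 1"
    "W3 av red (phi_map s) (disc av 0 (av s))"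
proof -
  let ?P = "disc av 0 (av s)"
  have "s \<noteq> 0"
    using s by auto
  then show T: "?P \<in> typeII av"
    by (rule disc_in_typeII)
  obtain a c where ch: "chart av ?P = (a, c)" "c \<noteq> 0" "av c = av s" "av a \<le> av s"
    using chart_disc[OF \<open>s \<noteq> 0\<close>, of 0] by auto
  define \<alpha> \<sigma> where "\<alpha> = red (a/c)" and "\<sigma> = red (s/c)"
  have "\<sigma> \<noteq> 0" and deg: "red_deg av red (phi_map s) ?P = 1"
    and eval: "eval_P1 (reduction av red (phi_map s) ?P) = eval_P1 ([:\<sigma>, 1:], [:1:])"
    using reduction_phi_translation[OF ch(1,2)] ch s by (simp_all add: \<sigma>_def)
  have "inverse (av s) < 1"
    using s by (simp add: inverse_less_1_iff)
  then have "av (- inverse s - a) \<le> av c"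
    using av_diff_le[of "- inverse s" a] ch s by (simp add: av_inverse)
  then obtain w where w: "direction av red ?P (Some (- inverse s)) = Some w"
    by (simp add: direction_def ch(1))
  then have "\<sigma> * (\<alpha> + w) = 0"
    using direction_fixed_point_phi[OF ch(1,2)] ch s \<open>s \<noteq> 0\<close> red_inverse_power2_eq_0[of c]
    by (simp add: \<alpha>_def \<sigma>_def)
  then have "w = - \<alpha>"
    using \<open>\<sigma> \<noteq> 0\<close> by (simp add: eq_neg_iff_add_eq_0 add.commute)
  then have dirs: "fix_dirs av red (phi_map s) ?P = {None, Some (- \<alpha>)}"
    using w \<open>s \<noteq> 0\<close> by (simp add: fix_dirs_phi)
  have "{d \<in> fix_dirs av red (phi_map s) ?P. eval_P1 ([:\<sigma>, 1:], [:1:]) d \<noteq> d} = {Some (- \<alpha>)}"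
    using \<open>\<sigma> \<noteq> 0\<close> by (auto simp: dirs eval_P1_def)
  then have "N_moved av red (phi_map s) ?P = 1"
    by (simp add: N_moved_def eval)
  moreover have fixed: "is_fixed av red (phi_map s) ?P"
    using T deg by (simp add: is_fixed_def)
  ultimately show "weight av red (phi_map s) ?P = 1"
    using deg by (simp add: weight_def)
  have "in_Gamma_Fix av red (phi_map s) ?P"
    using T by (simp add: in_Gamma_Fix_def dirs)
  with fixed \<open>\<sigma> \<noteq> 0\<close> eval show "W3 av red (phi_map s) ?P"
    by (rule W3_of_translation)
qed

end

theorem proposition3p1:
  fixes av :: "'k::field \<Rightarrow> real" and red :: "'k \<Rightarrow> 'r::field"
    and l3 s :: 'k and \<xi> :: "'k set"
  assumes "nonarch_abs av" and "complete_abs av" and "alg_closed TYPE('k)"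
    and "residue_map av red"
    and "s ^ 2 = 1 - l3"
    and "\<xi> \<in> typeII av" and "weight av red (phi_map s) \<xi> = 1"
    and "\<forall>P \<in> typeII av. weight av red (phi_map s) P = 1 \<longrightarrow> P = \<xi>"
  shows "(av l3 \<le> 1 \<longrightarrow> \<xi> = zeta_G av \<and> W1 av red (phi_map s) \<xi>) \<and>
         (1 < av l3 \<longrightarrow> \<xi> = disc av 0 (sqrt (av l3)) \<and> W3 av red (phi_map s) \<xi>)"
proof -
  interpret residue_field av red
    by unfold_locales (use assms(1,4) in auto)
  note unique = assms(8)[rule_format]
  show ?thesis
  proof (intro conjI impI)
    assume "av l3 \<le> 1"
    then have "av s \<le> 1"
      by (rule av_root_one_minus(1)[OF assms(5)])
    then have "zeta_G av = \<xi>" "W1 av red (phi_map s) (zeta_G av)"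
      using unique[OF zeta_G_in_typeII] weight_zeta_G_phi by blast+
    then show "\<xi> = zeta_G av" "W1 av red (phi_map s) \<xi>"
      by simp_all
  next
    assume "1 < av l3"
    then have "av s = sqrt (av l3)" "1 < av s"
      using av_root_one_minus(2)[OF assms(5)] by simp_all
    then have "disc av 0 (av s) = \<xi>" "W3 av red (phi_map s) (disc av 0 (av s))"
      using unique weight_disc_phi by blast+
    then show "\<xi> = disc av 0 (sqrt (av l3))" "W3 av red (phi_map s) \<xi>"
      using \<open>av s = sqrt (av l3)\<close> by simp_all
  qed
qed

end
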